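(* Let $\mathcal{F}\subset K[x_1,\ldots,x_n]$ be a chordal polynomial set with $x_1<\cdots<x_n$ as a perfect elimination ordering. Then every node $(\mathcal{P},\mathcal{Q},i)$ of the Wang decomposition tree $\mathcal{N}(\mathcal{F})$ satisfies $G(\mathcal{P})\subseteq G(\mathcal{F})$.
   Context: Let $K$ be a field and $K[x_1,\ldots,x_n]$ the polynomial ring, with the variables ordered $x_1<\cdots<x_n$. For a polynomial $F$, $\mathrm{supp}(F)$ is the set of variables effectively appearing in $F$. For a set of polynomials $\mathcal{P}$, $\mathrm{supp}(\mathcal{P})=\bigcup_{F\in\mathcal{P}}\mathrm{supp}(F)$. For a nonconstant $F$, $\mathrm{lv}(F)$ is the greatest variable in $\mathrm{supp}(F)$. For a polynomial set $\mathcal{P}$ and $1\le i\le n$, $\mathcal{P}^{(i)}=\{P\in\mathcal{P}:\mathrm{lv}(P)=x_i\}$; constants belong to no $\mathcal{P}^{(i)}$. The associated graph $G(\mathcal{P})$ is the undirected graph whose vertex set is $\mathrm{supp}(\mathcal{P})$, with an edge between distinct $x_i,x_j$ iff some $F\in\mathcal{P}$ has $x_i,x_j\in\mathrm{supp}(F)$. For graphs, $G\subseteq G'$ means that $G$ is a subgraph of $G'$, i.e. both the vertex set and the edge set are contained. An ordering of the vertices of a graph is a perfect elimination ordering if, for every vertex $v$, the set consisting of $v$ and all neighbours of $v$ smaller than $v$ is a clique. A polynomial set $\mathcal{P}$ is called chordal with $x_1<\cdots<x_n$ as a perfect elimination ordering if the restriction of this ordering to $\mathrm{supp}(\mathcal{P})$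 is a perfect elimination ordering of $G(\mathcal{P})$. For a nonconstant polynomial $F$ with $\mathrm{lv}(F)=x_k$, write $F=I x_k^d+R$ with $d=\deg(F,x_k)$, $I\in K[x_1,\ldots,x_{k-1}]$, and $\deg(R,x_k)<d$. Then $\mathrm{ini}(F)=I$ is the initial of $F$ and $\mathrm{tail}(F)=R$ is the tail of $F$. For $\mathrm{lv}(T)=x_i$, $\mathrm{prem}(P,T)$ is the pseudo-remainder of $P$ by $T$ with respect to $x_i$. The zero polynomial has empty support. Wang's decomposition tree: $\mathcal{N}(\mathcal{F})$ is the smallest set of triples $(\mathcal{P},\mathcal{Q},i)$, where $\mathcal{P},\mathcal{Q}$ are polynomial sets and $0\le i\le n$, satisfying the following: - $(\mathcal{F},\emptyset,n)\in\mathcal{N}(\mathcal{F})$. - If $(\mathcal{P},\mathcal{Q},i)\in\mathcal{N}(\mathcal{F})$ with $i\ge1$ and $\#\mathcal{P}^{(i)}>1$, then for every $T\in\mathcal{P}^{(i)}$ of minimal degree in $x_i$ among the elements of $\mathcal{P}^{(i)}$, both of the following triples belong to $\mathcal{N}(\mathcal{F})$: - the left child $\big((\mathcal{P}\setminus\mathcal{P}^{(i)})\cup\{T\}\cup\{\mathrm{prem}(P,T):P\in\mathcal{P}^{(i)}\},\ \mathcal{Q}\cup\{\mathrm{ini}(T)\},\ i\big)$; - the right child $\big((\mathcal{P}\setminus\{T\})\cup\{\mathrm{ini}(T),\mathrm{tail}(T)\},\ \mathcal{Q},\ i\big)$. - If $(\mathcal{P},\mathcal{Q},i)\in\mathcal{N}(\mathcal{F})$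 with $i\ge1$ and $\#\mathcal{P}^{(i)}\le1$, then $(\mathcal{P},\mathcal{Q},i-1)\in\mathcal{N}(\mathcal{F})$. This set contains all triples occurring in Wang's method for triangular decomposition applied to $\mathcal{F}$. *)

theory Defs
  imports "HOL-Library.Poly_Mapping"
begin

(* Multivariate polynomials over a field: finitely supported maps from monomials
  (exponent vectors nat \<Rightarrow>0 nat, variable x_k has index k) to coefficients.
  The ordering x_1 < ... < x_n is the natural order of the indices. *)

type_synonym 'a mpoly = "(nat \<Rightarrow>\<^sub>0 nat) \<Rightarrow>\<^sub>0 'a"

definition var :: "nat \<Rightarrow> 'a::comm_ring_1 mpoly" where
  "var k = Poly_Mapping.single (Poly_Mapping.single k 1) 1"

definition vars :: "'a::zero mpoly \<Rightarrow> nat set" where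
  "vars F = (\<Union>m \<in> Poly_Mapping.keys F. Poly_Mapping.keys m)"

definition vars_set :: "'a::zero mpoly set \<Rightarrow> nat set" where
  "vars_set P = (\<Union>F\<in>P. vars F)"

(* leading variable (meaningful for nonconstant F) *)
definition lv :: "'a::zero mpoly \<Rightarrow> nat" where
  "lv F = Max (vars F)"

definition level :: "'a::zero mpoly set \<Rightarrow> nat \<Rightarrow> 'a mpoly set" where
  "level P i = {F \<in> P. vars F \<noteq> {} \<and> lv F = i}"

definition deg :: "'a::zero mpoly \<Rightarrow> nat \<Rightarrow> nat" where
  "deg F k = Max (insert 0 ((\<lambda>m. Poly_Mapping.lookup m k) ` Poly_Mapping.keys F))"

definition coeff_in :: "'a::comm_ring_1 mpoly \<Rightarrow> nat \<Rightarrow> nat \<Rightarrow> 'a mpoly" where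
  "coeff_in F k d = (\<Sum>m \<in> {m \<in> Poly_Mapping.keys F. Poly_Mapping.lookup m k = d}.
      Poly_Mapping.single (m - Poly_Mapping.single k d) (Poly_Mapping.lookup F m))"

definition ini :: "'a::comm_ring_1 mpoly \<Rightarrow> 'a mpoly" where
  "ini F = coeff_in F (lv F) (deg F (lv F))"

definition tail :: "'a::comm_ring_1 mpoly \<Rightarrow> 'a mpoly" where
  "tail F = F - ini F * var (lv F) ^ deg F (lv F)"

(* pseudo-remainder of P by T w.r.t. x_i = lv T: the unique R with
  ini(T)^(max(e-d+1,0)) P = Q T + R and deg(R,x_i) < d. *)
definition prem :: "'a::field mpoly \<Rightarrow> 'a mpoly \<Rightarrow> 'a mpoly" where
  "prem P T = (THE R. \<exists>Q. ini T ^ (deg P (lv T) + 1 - deg T (lv T)) * P = Q * T + R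
                         \<and> deg R (lv T) < deg T (lv T))"

(* Associated graph G(P) as (vertex set, edge set); edges as ordered pairs (symmetric). *)
definition graph_verts :: "'a::zero mpoly set \<Rightarrow> nat set" where
  "graph_verts P = vars_set P"

definition graph_edges :: "'a::zero mpoly set \<Rightarrow> (nat \<times> nat) set" where
  "graph_edges P = {(a, b). a \<noteq> b \<and> (\<exists>F\<in>P. a \<in> vars F \<and> b \<in> vars F)}"

definition subgraph_of :: "'a::zero mpoly set \<Rightarrow> 'a mpoly set \<Rightarrow> bool" where
  "subgraph_of P F \<longleftrightarrow> graph_verts P \<subseteq> graph_verts F \<and> graph_edges P \<subseteq> graph_edges F"

definition chordal_peo :: "'a::zero mpoly set \<Rightarrow> bool" where
  "chordal_peo P \<longleftrightarrow> (\<forall>v \<in> graph_verts P.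
     (let C = insert v {u. (u, v) \<in> graph_edges P \<and> u < v} in
      \<forall>a\<in>C. \<forall>b\<in>C. a \<noteq> b \<longrightarrow> (a, b) \<in> graph_edges P))"

inductive_set wang_tree :: "'a::field mpoly set \<Rightarrow> nat \<Rightarrow> ('a mpoly set \<times> 'a mpoly set \<times> nat) set"
  for F :: "'a mpoly set" and n :: nat where
  root: "(F, {}, n) \<in> wang_tree F n"
| left: "\<lbrakk>(P, Q, i) \<in> wang_tree F n; i \<ge> 1; card (level P i) > 1 \<or> infinite (level P i);
          T \<in> level P i; \<forall>P' \<in> level P i. deg T i \<le> deg P' i\<rbrakk>
         \<Longrightarrow> ((P - level P i) \<union> {T} \<union> {prem P' T | P'. P' \<in> level P i},
              Q \<union> {ini T}, i) \<in> wang_tree F n"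
| right: "\<lbrakk>(P, Q, i) \<in> wang_tree F n; i \<ge> 1; card (level P i) > 1 \<or> infinite (level P i);
          T \<in> level P i; \<forall>P' \<in> level P i. deg T i \<le> deg P' i\<rbrakk>
         \<Longrightarrow> ((P - {T}) \<union> {ini T, tail T}, Q, i) \<in> wang_tree F n"
| down: "\<lbrakk>(P, Q, i) \<in> wang_tree F n; i \<ge> 1; finite (level P i); card (level P i) \<le> 1\<rbrakk>
         \<Longrightarrow> (P, Q, i - 1) \<in> wang_tree F n"

end

theory Submission
  imports Defs
begin

text \<open>
  By induction over the tree, every polynomial of every node has as its variable set a clique
  of \<open>G(F)\<close>. The right child only adds \<open>ini(T)\<close> and \<open>tail(T)\<close>, whose variables are among
  those of \<open>T\<close>. In the left child each \<open>prem(P, T)\<close> involves only variables of \<open>P\<close> and \<open>T\<close>;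
  both are cliques with the common largest vertex \<open>x\<^sub>i\<close>, so they lie in the set consisting
  of \<open>x\<^sub>i\<close> and its smaller neighbours, which is a clique since \<open>x\<^sub>1 < \<dots> < x\<^sub>n\<close> is a perfect
  elimination ordering. The variable bound for \<open>prem\<close> needs that the pseudo-remainder, defined
  by uniqueness, is the one produced by the usual reduction; uniqueness holds because the
  degree in \<open>x\<^sub>k\<close> is additive under multiplication.
\<close>

lemma var_pow: "(var k :: 'a::comm_ring_1 mpoly) ^ j = Poly_Mapping.single (Poly_Mapping.single k j) 1"
proof (induction j)
  case (Suc j)
  have "(var k :: 'a mpoly) ^ Suc j = var k * var k ^ j" by simp
  also have "\<dots> = Poly_Mapping.single (Poly_Mapping.single k 1 + Poly_Mapping.single k j) 1"
    unfolding Suc.IH by (simp add: var_def mult_single)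
  finally show ?case by (simp add: single_add[symmetric])
qed simp

lemma lookup_mult_single_one_add:
  fixes p :: "'a::comm_ring_1 mpoly"
  shows "Poly_Mapping.lookup (p * Poly_Mapping.single s 1) (m + s) = Poly_Mapping.lookup p m"
proof -
  have inner: "(\<Sum>q. Poly_Mapping.lookup (Poly_Mapping.single s 1) q when m + s = l + q)
      = ((1::'a) when l = m)" for l
  proof -
    have "(\<Sum>q. Poly_Mapping.lookup (Poly_Mapping.single s 1) q when m + s = l + q)
        = (\<Sum>q. ((1::'a) when l = m) when q = s)"
      by (rule Sum_any.cong) (auto simp: lookup_single when_def)
    then show ?thesis by simp
  qed
  show ?thesis
    by (simp add: lookup_mult inner mult_when)
qed

lemma deg_le_iff: "deg F k \<le> d \<longleftrightarrow> (\<forall>m\<in>Poly_Mapping.keys F. Poly_Mapping.lookup m k \<le> d)"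
  unfolding deg_def by (subst Max_le_iff) auto

lemma lookup_le_deg: "m \<in> Poly_Mapping.keys F \<Longrightarrow> Poly_Mapping.lookup m k \<le> deg F k"
  using deg_le_iff by blast

lemma deg_attained:
  assumes "F \<noteq> 0"
  shows "\<exists>m\<in>Poly_Mapping.keys F. Poly_Mapping.lookup m k = deg F k"
proof -
  obtain m0 where m0: "m0 \<in> Poly_Mapping.keys F"
    using assms by (metis keys_eq_empty ex_in_conv)
  have "deg F k \<in> insert 0 ((\<lambda>m. Poly_Mapping.lookup m k) ` Poly_Mapping.keys F)"
    unfolding deg_def by (rule Max_in) auto
  then show ?thesis
    using lookup_le_deg[OF m0, of k] m0 by auto
qed

lemma deg_zero [simp]: "deg 0 k = 0"
  unfolding deg_def by simp

lemma deg_add_le: "deg (A + B) k \<le> max (deg A k) (deg B k)"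
  unfolding deg_le_iff using keys_add[of A B] lookup_le_deg[of _ A k] lookup_le_deg[of _ B k]
  by fastforce

lemma deg_diff_le: "deg ((A::'a::ab_group_add mpoly) - B) k \<le> max (deg A k) (deg B k)"
  unfolding deg_le_iff using keys_diff[of A B] lookup_le_deg[of _ A k] lookup_le_deg[of _ B k]
  by fastforce

lemma deg_mult_le: "deg ((A::'a::comm_ring_1 mpoly) * B) k \<le> deg A k + deg B k"
  unfolding deg_le_iff
proof
  fix m assume "m \<in> Poly_Mapping.keys (A * B)"
  then obtain a b where "a \<in> Poly_Mapping.keys A" "b \<in> Poly_Mapping.keys B" "m = a + b"
    using keys_mult[of A B] by blast
  then show "Poly_Mapping.lookup m k \<le> deg A k + deg B k"
    using lookup_le_deg[of a A k] lookup_le_deg[of b B k] by (simp add: lookup_add)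
qed

lemma deg_pow_le: "deg ((A::'a::comm_ring_1 mpoly) ^ N) k \<le> N * deg A k"
proof (induction N)
  case (Suc N)
  then show ?case using deg_mult_le[of A "A ^ N" k] by simp
qed (simp add: deg_def)

lemma deg_var_pow_le: "deg ((var k :: 'a::comm_ring_1 mpoly) ^ j) k \<le> j"
  unfolding deg_le_iff var_pow by simp

lemma lookup_coeff_in_mult_var_pow:
  fixes F :: "'a::comm_ring_1 mpoly"
  shows "Poly_Mapping.lookup (coeff_in F k d * var k ^ d) m =
    (if Poly_Mapping.lookup m k = d then Poly_Mapping.lookup F m else 0)"
proof -
  have cancel: "m - Poly_Mapping.single k d + Poly_Mapping.single k d = m"
    if "Poly_Mapping.lookup m k = d" for m :: "nat \<Rightarrow>\<^sub>0 nat"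
    by (rule poly_mapping_eqI) (use that in \<open>auto simp: lookup_add lookup_minus lookup_single when_def\<close>)
  have "coeff_in F k d * var k ^ d =
      (\<Sum>m \<in> {m \<in> Poly_Mapping.keys F. Poly_Mapping.lookup m k = d}.
        Poly_Mapping.single m (Poly_Mapping.lookup F m))"
    unfolding coeff_in_def var_pow sum_distrib_right
    by (rule sum.cong) (auto simp: mult_single cancel)
  then show ?thesis
    by (auto simp: lookup_sum lookup_single when_def in_keys_iff)
qed

lemma keys_coeff_in:
  assumes "m \<in> Poly_Mapping.keys (coeff_in F k d)"
  obtains m' where "m' \<in> Poly_Mapping.keys F" "Poly_Mapping.lookup m' k = d"
    "m = m' - Poly_Mapping.single k d"
proof -
  have "Poly_Mapping.keys (coeff_in F k d) \<subseteq> (\<Union>m'\<in>{m' \<in> Poly_Mapping.keys F. Poly_Mapping.lookup m' k = d}.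
      Poly_Mapping.keys (Poly_Mapping.single (m' - Poly_Mapping.single k d) (Poly_Mapping.lookup F m')))"
    unfolding coeff_in_def by (rule keys_sum)
  with assms obtain m' where "m' \<in> Poly_Mapping.keys F" "Poly_Mapping.lookup m' k = d"
      "m \<in> Poly_Mapping.keys (Poly_Mapping.single (m' - Poly_Mapping.single k d) (Poly_Mapping.lookup F m'))"
    by blast
  then show ?thesis
    using that by (simp split: if_splits)
qed

lemma deg_coeff_in [simp]: "deg (coeff_in F k d) k = 0"
proof -
  have "Poly_Mapping.lookup m k = 0" if "m \<in> Poly_Mapping.keys (coeff_in F k d)" for m
    using that by (rule keys_coeff_in) (simp add: lookup_minus)
  then show ?thesis
    using deg_le_iff[of "coeff_in F k d" k 0] by simp
qed

lemma vars_coeff_in: "vars (coeff_in F k d) \<subseteq> vars F"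
proof
  fix x assume "x \<in> vars (coeff_in F k d)"
  then obtain m where "m \<in> Poly_Mapping.keys (coeff_in F k d)" "x \<in> Poly_Mapping.keys m"
    unfolding vars_def by blast
  obtain m' where "m' \<in> Poly_Mapping.keys F" "m = m' - Poly_Mapping.single k d"
    using \<open>m \<in> Poly_Mapping.keys (coeff_in F k d)\<close> by (rule keys_coeff_in)
  moreover from this(2) \<open>x \<in> Poly_Mapping.keys m\<close> have "x \<in> Poly_Mapping.keys m'"
    by (simp add: in_keys_iff lookup_minus)
  ultimately show "x \<in> vars F"
    unfolding vars_def by blast
qed

lemma coeff_in_deg_nonzero:
  assumes "(F::'a::comm_ring_1 mpoly) \<noteq> 0"
  shows "coeff_in F k (deg F k) \<noteq> 0"
proof
  assume zero: "coeff_in F k (deg F k) = 0"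
  obtain m where m: "m \<in> Poly_Mapping.keys F" "Poly_Mapping.lookup m k = deg F k"
    using deg_attained[OF assms] by blast
  have "Poly_Mapping.lookup (coeff_in F k (deg F k) * var k ^ deg F k) m = Poly_Mapping.lookup F m"
    using m(2) by (simp add: lookup_coeff_in_mult_var_pow)
  then show False using m(1) zero by (simp add: in_keys_iff)
qed

text \<open>The term \<open>I x\<^sub>k\<^sup>d\<close> in \<open>F = I x\<^sub>k\<^sup>d + R\<close> (\<open>d = deg F k\<close>); for \<open>k = lv F\<close> it is \<open>ini F * x\<^sub>k\<^sup>d\<close> and \<open>R = tail F\<close>.\<close>

definition lead_part :: "'a::comm_ring_1 mpoly \<Rightarrow> nat \<Rightarrow> 'a mpoly" where
  "lead_part F k = coeff_in F k (deg F k) * var k ^ deg F k"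

lemma deg_diff_lead_part: "deg (F - lead_part F k) k \<le> deg F k - 1"
  unfolding deg_le_iff
proof
  fix m assume "m \<in> Poly_Mapping.keys (F - lead_part F k)"
  then have "Poly_Mapping.lookup m k \<noteq> deg F k" "m \<in> Poly_Mapping.keys F"
    by (auto simp: lead_part_def lookup_minus lookup_coeff_in_mult_var_pow in_keys_iff
        split: if_splits)
  then show "Poly_Mapping.lookup m k \<le> deg F k - 1"
    using lookup_le_deg[of m F k] by linarith
qed

lemma deg_lead_part_le: "deg (lead_part (F::'a::comm_ring_1 mpoly) k) k \<le> deg F k"
proof -
  have "deg (lead_part F k) k \<le> deg (coeff_in F k (deg F k)) k + deg (var k ^ deg F k :: 'a mpoly) k"
    unfolding lead_part_def by (rule deg_mult_le)
  also have "\<dots> \<le> deg F k"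
    using deg_var_pow_le by simp
  finally show ?thesis .
qed

lemma lead_part_eq_self:
  assumes "deg (F::'a::comm_ring_1 mpoly) k = 0"
  shows "lead_part F k = F"
proof (rule poly_mapping_eqI)
  fix m
  have "Poly_Mapping.lookup F m = 0" if "Poly_Mapping.lookup m k \<noteq> 0"
    using lookup_le_deg[of m F k] assms that by (auto simp: in_keys_iff)
  then show "Poly_Mapping.lookup (lead_part F k) m = Poly_Mapping.lookup F m"
    using assms lookup_coeff_in_mult_var_pow[of F k 0 m] by (auto simp: lead_part_def)
qed

lemma deg_mult:
  fixes D T :: "'a::idom mpoly"
  assumes "D \<noteq> 0" "T \<noteq> 0"
  shows "deg (D * T) k = deg D k + deg T k"
proof (rule antisym[OF deg_mult_le])
  define e d where "e = deg D k" and "d = deg T k"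
  show "e + d \<le> deg (D * T) k"
  proof (cases "e + d = 0")
    case False
    define c where "c = coeff_in D k e * coeff_in T k d"
    define J where "J = lead_part D k * (T - lead_part T k) + (D - lead_part D k) * T"
    have DT: "D * T = c * var k ^ (e + d) + J"
      unfolding J_def c_def lead_part_def e_def d_def by (simp add: algebra_simps power_add)
    have "deg (lead_part D k * (T - lead_part T k)) k \<le> e + d - 1"
    proof (cases "d = 0")
      case False
      then show ?thesis
        using deg_mult_le[of "lead_part D k" "T - lead_part T k" k] deg_lead_part_le[of D k]
          deg_diff_lead_part[of T k] unfolding e_def d_def by linarith
    qed (simp add: lead_part_eq_self d_def)
    moreover have "deg ((D - lead_part D k) * T) k \<le> e + d - 1"
    proof (cases "e = 0")
      case False
      then show ?thesis
        using deg_mult_le[of "D - lead_part D k" T k] deg_diff_lead_part[of D k]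
        unfolding e_def d_def by linarith
    qed (simp add: lead_part_eq_self e_def)
    ultimately have "deg J k \<le> e + d - 1"
      using deg_add_le[of "lead_part D k * (T - lead_part T k)" "(D - lead_part D k) * T" k]
      unfolding J_def by linarith
    then have J_vanishes: "Poly_Mapping.lookup J m = 0" if "Poly_Mapping.lookup m k = e + d" for m
      using lookup_le_deg[of m J k] that False by (force simp: in_keys_iff)
    have "c \<noteq> 0"
      unfolding c_def e_def d_def by (simp add: coeff_in_deg_nonzero assms)
    then obtain m where m: "m \<in> Poly_Mapping.keys c"
      by (metis keys_eq_empty ex_in_conv)
    have "deg c k = 0"
      using deg_mult_le[of "coeff_in D k e" "coeff_in T k d" k] unfolding c_def by simp
    then have "Poly_Mapping.lookup m k = 0"
      using lookup_le_deg[OF m, of k] by simp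
    then have shifted: "Poly_Mapping.lookup (m + Poly_Mapping.single k (e + d)) k = e + d"
      by (simp add: lookup_add)
    have "Poly_Mapping.lookup (D * T) (m + Poly_Mapping.single k (e + d)) = Poly_Mapping.lookup c m"
      unfolding DT lookup_add var_pow lookup_mult_single_one_add J_vanishes[OF shifted] by simp
    then have "m + Poly_Mapping.single k (e + d) \<in> Poly_Mapping.keys (D * T)"
      using m by (simp add: in_keys_iff)
    then show ?thesis
      using lookup_le_deg shifted by metis
  qed simp
qed

lemma vars_diff: "vars ((A::'a::ab_group_add mpoly) - B) \<subseteq> vars A \<union> vars B"
  unfolding vars_def using keys_diff[of A B] by auto

lemma vars_mult: "vars ((A::'a::comm_ring_1 mpoly) * B) \<subseteq> vars A \<union> vars B"
proof
  fix x assume "x \<in> vars (A * B)"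
  then obtain m where m: "m \<in> Poly_Mapping.keys (A * B)" "x \<in> Poly_Mapping.keys m"
    unfolding vars_def by auto
  then obtain a b where "a \<in> Poly_Mapping.keys A" "b \<in> Poly_Mapping.keys B" "m = a + b"
    using keys_mult[of A B] by blast
  then show "x \<in> vars A \<union> vars B"
    using m(2) keys_add[of a b] unfolding vars_def by blast
qed

lemma vars_pow: "vars ((A::'a::comm_ring_1 mpoly) ^ n) \<subseteq> vars A"
proof (induction n)
  case (Suc n)
  then show ?case using vars_mult[of A "A ^ n"] by auto
qed (simp add: vars_def)

lemma vars_var_pow: "vars ((var k :: 'a::comm_ring_1 mpoly) ^ j) \<subseteq> {k}"
  unfolding var_pow vars_def by auto

lemma finite_vars: "finite (vars F)"
  unfolding vars_def by auto

lemma in_vars_if_deg_pos: "0 < deg F k \<Longrightarrow> k \<in> vars F"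
  using deg_attained[of F k] unfolding vars_def by (force simp: in_keys_iff)

subsection \<open>Pseudo-division\<close>

lemma remainder_unique:
  fixes T :: "'a::idom mpoly"
  assumes "T \<noteq> 0" "Q1 * T + R1 = Q2 * T + R2"
    and "deg R1 k < deg T k" "deg R2 k < deg T k"
  shows "R1 = R2"
proof (rule ccontr)
  assume "R1 \<noteq> R2"
  have "(Q1 - Q2) * T = R2 - R1"
    using assms(2) by (simp add: algebra_simps)
  with \<open>R1 \<noteq> R2\<close> have "Q1 - Q2 \<noteq> 0" by auto
  then have "deg T k \<le> deg (R2 - R1) k"
    using deg_mult[OF _ assms(1), of "Q1 - Q2" k] \<open>(Q1 - Q2) * T = R2 - R1\<close> by simp
  then show False
    using deg_diff_le[of R2 R1 k] assms(3,4) by linarith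
qed

lemma deg_pseudo_reduction_step:
  fixes P T :: "'a::comm_ring_1 mpoly"
  assumes "1 \<le> deg T k" "deg T k \<le> deg P k"
  shows "deg (coeff_in T k (deg T k) * P - coeff_in P k (deg P k) * var k ^ (deg P k - deg T k) * T) k
    < deg P k"
proof -
  define e d I c where "e = deg P k" and "d = deg T k"
    and "I = coeff_in T k d" and "c = coeff_in P k e"
  have "var k ^ e = (var k ^ (e - d) :: 'a mpoly) * var k ^ d"
    using assms unfolding e_def d_def by (simp add: power_add[symmetric])
  then have step: "I * P - c * var k ^ (e - d) * T
      = I * (P - lead_part P k) - c * var k ^ (e - d) * (T - lead_part T k)"
    unfolding lead_part_def I_def c_def e_def[symmetric] d_def[symmetric] by (simp add: algebra_simps)
  have "deg (I * (P - lead_part P k)) k \<le> e - 1"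
    using deg_mult_le[of I "P - lead_part P k" k] deg_diff_lead_part[of P k]
    unfolding I_def e_def by simp
  moreover have "deg (c * var k ^ (e - d) * (T - lead_part T k)) k \<le> e - 1"
    using deg_mult_le[of "c * var k ^ (e - d)" "T - lead_part T k" k]
      deg_mult_le[of c "var k ^ (e - d)" k] deg_var_pow_le[of k "e - d", where 'a='a]
      deg_diff_lead_part[of T k] assms
    unfolding c_def e_def d_def by simp
  ultimately have "deg (I * P - c * var k ^ (e - d) * T) k < e"
    using deg_diff_le[of "I * (P - lead_part P k)" "c * var k ^ (e - d) * (T - lead_part T k)" k]
      assms unfolding step e_def[symmetric] d_def[symmetric] by linarith
  then show ?thesis
    unfolding I_def c_def e_def d_def .
qed

lemma pseudo_division_exists:
  fixes P T :: "'a::comm_ring_1 mpoly"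
  assumes "1 \<le> deg T k" "deg P k + 1 - deg T k \<le> N"
  shows "\<exists>Q R. coeff_in T k (deg T k) ^ N * P = Q * T + R
    \<and> deg R k < deg T k \<and> vars R \<subseteq> vars P \<union> vars T"
  using assms(2)
proof (induction "deg P k" arbitrary: P N rule: less_induct)
  case less
  define e d I where "e = deg P k" and "d = deg T k" and "I = coeff_in T k d"
  have vars_I_pow: "vars (I ^ N) \<subseteq> vars T" for N
    using vars_pow[of I N] vars_coeff_in[of T k d] unfolding I_def by blast
  show ?case
  proof (cases "e < d")
    case True
    have "deg (I ^ N * P) k < d"
      using deg_mult_le[of "I ^ N" P k] deg_pow_le[of I N k] True unfolding I_def e_def by simp
    moreover have "vars (I ^ N * P) \<subseteq> vars P \<union> vars T"
      using vars_mult[of "I ^ N" P] vars_I_pow by blast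
    moreover have "I ^ N * P = 0 * T + I ^ N * P" by simp
    ultimately show ?thesis
      unfolding I_def d_def by blast
  next
    case False
    define c where "c = coeff_in P k e"
    define P1 where "P1 = I * P - c * var k ^ (e - d) * T"
    have deg_P1: "deg P1 k < e"
      using deg_pseudo_reduction_step[OF assms(1)] False
      unfolding P1_def I_def c_def e_def d_def by simp
    obtain N' where N: "N = Suc N'"
      using less.prems False assms(1) unfolding e_def d_def by (cases N) auto
    have "deg P1 k + 1 - deg T k \<le> N'"
      using deg_P1 less.prems N unfolding e_def by linarith
    then obtain Q1 R where QR: "I ^ N' * P1 = Q1 * T + R" "deg R k < d"
        "vars R \<subseteq> vars P1 \<union> vars T"
      using less.hyps[OF deg_P1[unfolded e_def]] unfolding I_def d_def by blast
    have "I ^ N * P = I ^ N' * (P1 + c * var k ^ (e - d) * T)"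
      unfolding N P1_def by (simp add: algebra_simps)
    also have "\<dots> = (Q1 + I ^ N' * c * var k ^ (e - d)) * T + R"
      using QR(1) by (simp add: algebra_simps)
    finally have division: "I ^ N * P = (Q1 + I ^ N' * c * var k ^ (e - d)) * T + R" .
    have "vars P1 \<subseteq> vars (I * P) \<union> vars (c * var k ^ (e - d) * T)"
      unfolding P1_def by (rule vars_diff)
    moreover have "vars (I * P) \<subseteq> vars I \<union> vars P" by (rule vars_mult)
    moreover have "vars (c * var k ^ (e - d) * T) \<subseteq> vars c \<union> vars (var k ^ (e - d) :: 'a mpoly) \<union> vars T"
      using vars_mult[of "c * var k ^ (e - d)" T] vars_mult[of c "var k ^ (e - d)"] by blast
    moreover have "k \<in> vars T"
      using assms(1) by (intro in_vars_if_deg_pos) simp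
    ultimately have "vars P1 \<subseteq> vars P \<union> vars T"
      using vars_coeff_in[of T k d] vars_coeff_in[of P k e] vars_var_pow[of k "e - d", where 'a='a]
      unfolding I_def c_def by blast
    then show ?thesis
      using division QR(2,3) unfolding I_def d_def by blast
  qed
qed

lemma lv_in_vars: "vars F \<noteq> {} \<Longrightarrow> lv F \<in> vars F"
  unfolding lv_def using finite_vars by (rule Max_in)

lemma le_lv: "x \<in> vars F \<Longrightarrow> x \<le> lv F"
  unfolding lv_def using finite_vars by (rule Max_ge)

lemma deg_lv_pos:
  assumes "vars F \<noteq> {}"
  shows "0 < deg F (lv F)"
proof -
  obtain m where "m \<in> Poly_Mapping.keys F" "lv F \<in> Poly_Mapping.keys m"
    using lv_in_vars[OF assms] unfolding vars_def by blast
  then show ?thesis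
    using lookup_le_deg[of m F "lv F"] by (simp add: in_keys_iff)
qed

lemma vars_prem:
  fixes P T :: "'a::field mpoly"
  assumes "vars T \<noteq> {}"
  shows "vars (prem P T) \<subseteq> vars P \<union> vars T"
proof -
  define k N where "k = lv T" and "N = deg P k + 1 - deg T k"
  have "1 \<le> deg T k"
    using deg_lv_pos[OF assms] unfolding k_def by simp
  then obtain Q R where QR: "ini T ^ N * P = Q * T + R" "deg R k < deg T k"
      "vars R \<subseteq> vars P \<union> vars T"
    using pseudo_division_exists[of T k P N] unfolding N_def ini_def k_def by auto
  have "prem P T = R"
    unfolding prem_def k_def[symmetric] N_def[symmetric]
  proof (rule the_equality)
    show "\<exists>Q. ini T ^ N * P = Q * T + R \<and> deg R k < deg T k"
      using QR(1,2) by blast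
  next
    fix R' assume "\<exists>Q'. ini T ^ N * P = Q' * T + R' \<and> deg R' k < deg T k"
    then obtain Q' where "ini T ^ N * P = Q' * T + R'" "deg R' k < deg T k"
      by blast
    moreover have "T \<noteq> 0"
      using \<open>1 \<le> deg T k\<close> by auto
    ultimately show "R' = R"
      using remainder_unique[of T Q' R' Q R k] QR(1,2) by simp
  qed
  then show ?thesis
    using QR(3) by simp
qed

lemma vars_ini: "vars (ini (F::'a::comm_ring_1 mpoly)) \<subseteq> vars F"
  unfolding ini_def by (rule vars_coeff_in)

lemma vars_tail:
  fixes F :: "'a::comm_ring_1 mpoly"
  assumes "vars F \<noteq> {}"
  shows "vars (tail F) \<subseteq> vars F"
proof -
  have "vars (tail F) \<subseteq> vars F \<union> (vars (ini F) \<union> vars (var (lv F) ^ deg F (lv F) :: 'a mpoly))"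
    unfolding tail_def using vars_diff[of F "ini F * var (lv F) ^ deg F (lv F)"]
      vars_mult[of "ini F" "var (lv F) ^ deg F (lv F)"] by blast
  then show ?thesis
    using vars_ini[of F] vars_var_pow[of "lv F" "deg F (lv F)", where 'a='a] lv_in_vars[OF assms]
    by blast
qed

subsection \<open>Cliques of the associated graph\<close>

definition clique_of :: "'a::zero mpoly set \<Rightarrow> nat set \<Rightarrow> bool" where
  "clique_of F V \<longleftrightarrow> V \<subseteq> graph_verts F \<and> (\<forall>a\<in>V. \<forall>b\<in>V. a \<noteq> b \<longrightarrow> (a, b) \<in> graph_edges F)"

lemma subgraph_of_iff_cliques: "subgraph_of P F \<longleftrightarrow> (\<forall>G\<in>P. clique_of F (vars G))"
  unfolding subgraph_of_def clique_of_def graph_verts_def vars_set_def graph_edges_def by blast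

lemma clique_of_subset: "clique_of F V \<Longrightarrow> W \<subseteq> V \<Longrightarrow> clique_of F W"
  unfolding clique_of_def by blast

text \<open>In a perfect elimination ordering every clique lies in the closed lower neighbourhood of its
  largest vertex, which is itself a clique.\<close>

lemma clique_of_Un_common_max:
  assumes "chordal_peo F" "clique_of F U" "clique_of F V"
    and "i \<in> U" "i \<in> V" "\<forall>u\<in>U \<union> V. u \<le> i"
  shows "clique_of F (U \<union> V)"
proof -
  define C where "C = insert i {u. (u, i) \<in> graph_edges F \<and> u < i}"
  have "i \<in> graph_verts F"
    using assms(2,4) unfolding clique_of_def by blast
  with assms(1) have C_clique: "\<forall>a\<in>C. \<forall>b\<in>C. a \<noteq> b \<longrightarrow> (a, b) \<in> graph_edges F"
    unfolding chordal_peo_def Let_def C_def by blast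
  have in_C: "u \<in> C" if "clique_of F W" "i \<in> W" "u \<in> W" "u \<le> i" for W u
  proof (cases "u = i")
    case False
    with that have "(u, i) \<in> graph_edges F"
      unfolding clique_of_def by blast
    with False \<open>u \<le> i\<close> show ?thesis
      unfolding C_def by simp
  qed (simp add: C_def)
  have "U \<union> V \<subseteq> C"
    using in_C[OF assms(2,4)] in_C[OF assms(3,5)] assms(6) by blast
  with C_clique assms(2,3) show ?thesis
    unfolding clique_of_def by blast
qed

lemma clique_of_level:
  assumes "chordal_peo F" "subgraph_of P F" "A \<in> level P i" "B \<in> level P i"
  shows "clique_of F (vars A \<union> vars B)"
proof -
  have A: "A \<in> P" "vars A \<noteq> {}" "lv A = i" and B: "B \<in> P" "vars B \<noteq> {}" "lv B = i"
    using assms(3,4) unfolding level_def by auto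
  have "clique_of F (vars A)" "clique_of F (vars B)"
    using assms(2) A(1) B(1) unfolding subgraph_of_iff_cliques by blast+
  moreover have "i \<in> vars A" "i \<in> vars B"
    using lv_in_vars[OF A(2)] lv_in_vars[OF B(2)] A(3) B(3) by simp_all
  moreover have "\<forall>u\<in>vars A \<union> vars B. u \<le> i"
    using le_lv[of _ A] le_lv[of _ B] unfolding A(3) B(3) by blast
  ultimately show ?thesis
    by (rule clique_of_Un_common_max[OF assms(1)])
qed

theorem theorem4p3:
  fixes F :: "'a::field mpoly set" and n :: nat
  assumes "\<forall>f\<in>F. vars f \<subseteq> {1..n}"
    and "chordal_peo F"
    and "(P, Q, i) \<in> wang_tree F n"
  shows "subgraph_of P F"
  using assms(3)
proof (induction rule: wang_tree.induct)
  case root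
  show ?case unfolding subgraph_of_def by simp
next
  case (left P Q i T)
  have T: "T \<in> P" "vars T \<noteq> {}"
    using left.hyps(4) unfolding level_def by auto
  have "clique_of F (vars (prem P' T))" if "P' \<in> level P i" for P'
    using clique_of_level[OF assms(2) left.IH that left.hyps(4)] vars_prem[OF T(2)]
    by (rule clique_of_subset)
  with left.IH T(1) show ?case
    unfolding subgraph_of_iff_cliques by blast
next
  case (right P Q i T)
  have T: "T \<in> P" "vars T \<noteq> {}"
    using right.hyps(4) unfolding level_def by auto
  then have "clique_of F (vars T)"
    using right.IH unfolding subgraph_of_iff_cliques by blast
  then have "clique_of F (vars (ini T))" "clique_of F (vars (tail T))"
    using clique_of_subset vars_ini vars_tail[OF T(2)] by blast+
  with right.IH show ?case
    unfolding subgraph_of_iff_cliques by blast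
next
  case (down P Q i)
  then show ?case by simp
qed

end
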